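(* Let $\alpha$ be an expanding algebraic number, $\mathcal{D}\subset\mathbb{Z}[\alpha]$ a standard digit set for $\alpha$, and $m\in\mathbb{Z}$ with $\mathcal{D}\subset\alpha^m\mathbb{Z}[\alpha^{-1}]$. Let $x,y\in\Lambda_{\alpha,m}$ and $k\ge0$ with $x-y\in\Lambda_{\alpha,m-k}$. Then $\alpha^{-k}(T_\alpha^{-k}(x)\cap\Lambda_{\alpha,m})-x=\alpha^{-k}(T_\alpha^{-k}(y)\cap\Lambda_{\alpha,m})-y$.
   Context: $\alpha$ is an algebraic number all of whose conjugates have modulus $>1$. $\mathcal{D}$ standard: complete residue system of $\mathbb{Z}[\alpha]/\alpha\mathbb{Z}[\alpha]$. $\Lambda_{\alpha,k}=\mathbb{Z}[\alpha]\cap\alpha^{k-1}\mathbb{Z}[\alpha^{-1}]$. $T_\alpha:\mathbb{Z}[\alpha]\to\mathbb{Z}[\alpha]$, $x\mapsto\alpha^{-1}(x-d)$ with $d\in\mathcal{D}$ the unique digit such that $\alpha^{-1}(x-d)\in\mathbb{Z}[\alpha]$; $T_\alpha^{-k}(x)$ is the preimage set of $x$ under the $k$-th iterate. Sets are subsets of $\mathbb{Q}(\alpha)$, with $\alpha^{-k}S-x=\{\alpha^{-k}s-x:s\in S\}$. *)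

theory Defs
  imports "HOL-Computational_Algebra.Computational_Algebra"
begin

definition Zring :: "complex \<Rightarrow> complex set" where
  "Zring \<beta> = {poly (map_poly of_int p) \<beta> | p :: int poly. True}"

text \<open>Conjugates of an algebraic number: the complex roots of its minimal polynomial
  over Q (any irreducible rational polynomial vanishing at alpha).\<close>
definition conjugates :: "complex \<Rightarrow> complex set" where
  "conjugates \<alpha> = {z. \<exists>p :: rat poly. irreducible p \<and> poly (map_poly of_rat p) \<alpha> = 0
                        \<and> poly (map_poly of_rat p) z = 0}"

definition expanding :: "complex \<Rightarrow> bool" where
  "expanding \<alpha> \<longleftrightarrow> algebraic \<alpha> \<and> (\<forall>z\<in>conjugates \<alpha>. norm z > 1)"

definition standard_digits :: "complex \<Rightarrow> complex set \<Rightarrow> bool" where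
  "standard_digits \<alpha> D \<longleftrightarrow> D \<subseteq> Zring \<alpha> \<and>
     (\<forall>x\<in>Zring \<alpha>. \<exists>!d. d \<in> D \<and> x - d \<in> (\<lambda>z. \<alpha> * z) ` Zring \<alpha>)"

definition Lambda :: "complex \<Rightarrow> int \<Rightarrow> complex set" where
  "Lambda \<alpha> k = Zring \<alpha> \<inter> (\<lambda>z. \<alpha> powi (k - 1) * z) ` Zring (inverse \<alpha>)"

definition digit_of :: "complex \<Rightarrow> complex set \<Rightarrow> complex \<Rightarrow> complex" where
  "digit_of \<alpha> D x = (THE d. d \<in> D \<and> (x - d) / \<alpha> \<in> Zring \<alpha>)"

definition Tmap :: "complex \<Rightarrow> complex set \<Rightarrow> complex \<Rightarrow> complex" where
  "Tmap \<alpha> D x = (x - digit_of \<alpha> D x) / \<alpha>"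

definition Tinv :: "complex \<Rightarrow> complex set \<Rightarrow> nat \<Rightarrow> complex \<Rightarrow> complex set" where
  "Tinv \<alpha> D k x = {z \<in> Zring \<alpha>. (Tmap \<alpha> D ^^ k) z = x}"

end

theory Submission
  imports Defs
begin

text \<open>Digits depend only on residues modulo \<open>\<alpha>\<close>, so adding \<open>\<alpha>\<^sup>k w\<close> with \<open>w \<in> \<int>[\<alpha>]\<close> to a point
  adds \<open>w\<close> to its \<open>k\<close>-th \<open>T\<^sub>\<alpha>\<close>-iterate. Hence \<open>s \<mapsto> s + \<alpha>\<^sup>k (y - x)\<close> maps \<open>T\<^sub>\<alpha>\<^sup>-\<^sup>k(x)\<close> into
  \<open>T\<^sub>\<alpha>\<^sup>-\<^sup>k(y)\<close>; it preserves \<open>\<Lambda>\<^sub>\<alpha>\<^sub>,\<^sub>m\<close> because \<open>y - x \<in> \<Lambda>\<^sub>\<alpha>\<^sub>,\<^sub>m\<^sub>-\<^sub>k\<close>, and after rescaling by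
  \<open>\<alpha>\<^sup>-\<^sup>k\<close> and subtracting the base point the translation cancels.\<close>

lemma Zring_add: "a \<in> Zring \<beta> \<Longrightarrow> c \<in> Zring \<beta> \<Longrightarrow> a + c \<in> Zring \<beta>"
proof -
  assume "a \<in> Zring \<beta>" "c \<in> Zring \<beta>"
  then obtain p q :: "int poly" where "a = poly (map_poly of_int p) \<beta>"
    and "c = poly (map_poly of_int q) \<beta>" unfolding Zring_def by auto
  moreover have "map_poly (of_int :: int \<Rightarrow> complex) (p + q) = map_poly of_int p + map_poly of_int q"
    by (rule poly_eqI) (simp add: coeff_map_poly)
  ultimately have "a + c = poly (map_poly of_int (p + q)) \<beta>" by simp
  thus ?thesis unfolding Zring_def by blast
qed

lemma Zring_uminus: "a \<in> Zring \<beta> \<Longrightarrow> - a \<in> Zring \<beta>"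
proof -
  assume "a \<in> Zring \<beta>"
  then obtain p :: "int poly" where "a = poly (map_poly of_int p) \<beta>"
    unfolding Zring_def by auto
  moreover have "map_poly (of_int :: int \<Rightarrow> complex) (- p) = - map_poly of_int p"
    by (rule poly_eqI) (simp add: coeff_map_poly)
  ultimately have "- a = poly (map_poly of_int (- p)) \<beta>" by simp
  thus ?thesis unfolding Zring_def by blast
qed

lemma Zring_diff: "a \<in> Zring \<beta> \<Longrightarrow> c \<in> Zring \<beta> \<Longrightarrow> a - c \<in> Zring \<beta>"
  using Zring_add[of a \<beta> "- c"] Zring_uminus by simp

lemma Zring_mult_base: "a \<in> Zring \<beta> \<Longrightarrow> \<beta> * a \<in> Zring \<beta>"
proof -
  assume "a \<in> Zring \<beta>"
  then obtain p :: "int poly" where "a = poly (map_poly of_int p) \<beta>"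
    unfolding Zring_def by auto
  hence "\<beta> * a = poly (map_poly of_int (pCons 0 p)) \<beta>" by (simp add: map_poly_pCons)
  thus ?thesis unfolding Zring_def by blast
qed

lemma Zring_mult_base_power: "a \<in> Zring \<beta> \<Longrightarrow> \<beta> ^ n * a \<in> Zring \<beta>"
  by (induction n) (auto simp: mult.assoc dest: Zring_mult_base)

lemma expanding_nonzero: "expanding \<alpha> \<Longrightarrow> \<alpha> \<noteq> 0"
proof
  assume "expanding \<alpha>" "\<alpha> = 0"
  have "irreducible [:0, 1::rat:]" by (rule irreducible_linear_field_poly) simp
  hence "0 \<in> conjugates \<alpha>" unfolding conjugates_def \<open>\<alpha> = 0\<close>
    by (intro CollectI exI[of _ "[:0, 1:]"]) (simp add: map_poly_pCons)
  with \<open>expanding \<alpha>\<close> show False unfolding expanding_def by auto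
qed

lemma Lambda_uminus: "a \<in> Lambda \<alpha> j \<Longrightarrow> - a \<in> Lambda \<alpha> j"
  unfolding Lambda_def using Zring_uminus
  by (auto simp: image_iff) (metis mult_minus_right)

lemma Lambda_add_power_mult:
  assumes "\<alpha> \<noteq> 0" "s \<in> Lambda \<alpha> m" "w \<in> Lambda \<alpha> (m - int k)"
  shows "s + \<alpha> ^ k * w \<in> Lambda \<alpha> m"
proof -
  obtain v where v: "v \<in> Zring (inverse \<alpha>)" "s = \<alpha> powi (m - 1) * v"
    using assms(2) unfolding Lambda_def by auto
  obtain u where u: "u \<in> Zring (inverse \<alpha>)" "w = \<alpha> powi (m - int k - 1) * u"
    using assms(3) unfolding Lambda_def by auto
  have "\<alpha> ^ k * \<alpha> powi (m - int k - 1) = \<alpha> powi (m - 1)"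
    using assms(1) by (simp add: power_int_add[symmetric] flip: power_int_of_nat)
  hence "s + \<alpha> ^ k * w = \<alpha> powi (m - 1) * (v + u)"
    unfolding v(2) u(2) by (simp add: distrib_left flip: mult.assoc)
  moreover have "s + \<alpha> ^ k * w \<in> Zring \<alpha>"
    using assms(2,3) unfolding Lambda_def by (simp add: Zring_add Zring_mult_base_power)
  ultimately show ?thesis
    using Zring_add[OF v(1) u(1)] unfolding Lambda_def by blast
qed

lemma digit_of_spec:
  assumes "\<alpha> \<noteq> 0" "standard_digits \<alpha> D" "s \<in> Zring \<alpha>"
  shows "digit_of \<alpha> D s \<in> D \<and> (s - digit_of \<alpha> D s) / \<alpha> \<in> Zring \<alpha>"
proof -
  have "(s - d) / \<alpha> \<in> Zring \<alpha> \<longleftrightarrow> s - d \<in> (\<lambda>z. \<alpha> * z) ` Zring \<alpha>" for d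
    using assms(1) image_eqI[of "s - d" "\<lambda>z. \<alpha> * z" "(s - d) / \<alpha>"] by auto
  moreover have "\<exists>!d. d \<in> D \<and> s - d \<in> (\<lambda>z. \<alpha> * z) ` Zring \<alpha>"
    using assms(2,3) unfolding standard_digits_def by blast
  ultimately have "\<exists>!d. d \<in> D \<and> (s - d) / \<alpha> \<in> Zring \<alpha>" by simp
  thus ?thesis unfolding digit_of_def by (rule theI')
qed

lemma Tmap_in_Zring:
  "\<alpha> \<noteq> 0 \<Longrightarrow> standard_digits \<alpha> D \<Longrightarrow> s \<in> Zring \<alpha> \<Longrightarrow> Tmap \<alpha> D s \<in> Zring \<alpha>"
  using digit_of_spec unfolding Tmap_def by blast

lemma digit_of_add_base_mult:
  assumes "\<alpha> \<noteq> 0" "u \<in> Zring \<alpha>"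
  shows "digit_of \<alpha> D (s + \<alpha> * u) = digit_of \<alpha> D s"
proof -
  have "(s + \<alpha> * u - d) / \<alpha> = (s - d) / \<alpha> + u" for d
    using assms(1) by (simp add: field_simps)
  hence "(s + \<alpha> * u - d) / \<alpha> \<in> Zring \<alpha> \<longleftrightarrow> (s - d) / \<alpha> \<in> Zring \<alpha>" for d
    using Zring_add Zring_diff assms(2) by (metis add_diff_cancel_right')
  thus ?thesis unfolding digit_of_def by simp
qed

lemma funpow_Tmap_add_power_mult:
  assumes "\<alpha> \<noteq> 0" "standard_digits \<alpha> D" "s \<in> Zring \<alpha>" "w \<in> Zring \<alpha>"
  shows "(Tmap \<alpha> D ^^ k) (s + \<alpha> ^ k * w) = (Tmap \<alpha> D ^^ k) s + w"
  using assms(3)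
proof (induction k arbitrary: s)
  case 0
  show ?case by simp
next
  case (Suc k)
  have "Tmap \<alpha> D (s + \<alpha> ^ Suc k * w) = Tmap \<alpha> D s + \<alpha> ^ k * w"
    using digit_of_add_base_mult[OF assms(1) Zring_mult_base_power[OF assms(4)], of D s] assms(1)
    unfolding Tmap_def by (simp add: field_simps)
  thus ?case
    using Suc.IH[OF Tmap_in_Zring[OF assms(1,2) Suc.prems]]
    by (simp add: funpow_Suc_right del: funpow.simps)
qed

lemma Tinv_add_power_mult:
  assumes "\<alpha> \<noteq> 0" "standard_digits \<alpha> D" "s \<in> Tinv \<alpha> D k x" "y - x \<in> Zring \<alpha>"
  shows "s + \<alpha> ^ k * (y - x) \<in> Tinv \<alpha> D k y"
  using assms funpow_Tmap_add_power_mult[OF assms(1,2) _ assms(4), of s k]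
  by (auto simp: Tinv_def Zring_add Zring_mult_base_power)

lemma rescaled_Tinv_subset:
  assumes "\<alpha> \<noteq> 0" "standard_digits \<alpha> D" "y - x \<in> Lambda \<alpha> (m - int k)"
  shows "(\<lambda>s. \<alpha> powi (- int k) * s - x) ` (Tinv \<alpha> D k x \<inter> Lambda \<alpha> m)
       \<subseteq> (\<lambda>s. \<alpha> powi (- int k) * s - y) ` (Tinv \<alpha> D k y \<inter> Lambda \<alpha> m)"
proof
  fix t assume "t \<in> (\<lambda>s. \<alpha> powi (- int k) * s - x) ` (Tinv \<alpha> D k x \<inter> Lambda \<alpha> m)"
  then obtain s where s: "s \<in> Tinv \<alpha> D k x" "s \<in> Lambda \<alpha> m"
    and t: "t = \<alpha> powi (- int k) * s - x" by auto
  define s' where "s' = s + \<alpha> ^ k * (y - x)"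
  have "y - x \<in> Zring \<alpha>" using assms(3) unfolding Lambda_def by blast
  hence "s' \<in> Tinv \<alpha> D k y \<inter> Lambda \<alpha> m"
    unfolding s'_def using Tinv_add_power_mult Lambda_add_power_mult assms s by blast
  moreover have "t = \<alpha> powi (- int k) * s' - y"
  proof -
    have "\<alpha> powi (- int k) * \<alpha> ^ k = 1"
      using assms(1) by (simp add: power_int_minus)
    thus ?thesis unfolding t s'_def by (simp add: distrib_left flip: mult.assoc)
  qed
  ultimately show "t \<in> (\<lambda>s. \<alpha> powi (- int k) * s - y) ` (Tinv \<alpha> D k y \<inter> Lambda \<alpha> m)"
    by blast
qed

theorem lemma6p12:
  fixes \<alpha> :: complex and D :: "complex set" and m :: int and x y :: complex and k :: nat
  assumes "expanding \<alpha>"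
    and "standard_digits \<alpha> D"
    and "D \<subseteq> (\<lambda>z. \<alpha> powi m * z) ` Zring (inverse \<alpha>)"
    and "x \<in> Lambda \<alpha> m" and "y \<in> Lambda \<alpha> m"
    and "x - y \<in> Lambda \<alpha> (m - int k)"
  shows "(\<lambda>s. \<alpha> powi (- int k) * s - x) ` (Tinv \<alpha> D k x \<inter> Lambda \<alpha> m)
       = (\<lambda>s. \<alpha> powi (- int k) * s - y) ` (Tinv \<alpha> D k y \<inter> Lambda \<alpha> m)"
proof -
  have "\<alpha> \<noteq> 0" using expanding_nonzero assms(1) .
  moreover have "y - x \<in> Lambda \<alpha> (m - int k)"
    using Lambda_uminus[OF assms(6)] by simp
  ultimately show ?thesis
    using rescaled_Tinv_subset[of \<alpha> D y x m k] rescaled_Tinv_subset[of \<alpha> D x y m k] assms(2,6)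
    by blast
qed

end
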